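(* Fix $n,m\in\mathbb N$. If $L\subseteq\mathbb R^{nm}$ is an origin-symmetric convex body and $v\in\mathbb S^{n-1}$, then $\bar S_v^*(L^\circ)\subseteq(\bar S_v L)^\circ$.
   Context: Write points of $\mathbb R^{nm}$ as $x=(x_1,\dots,x_m)$ with $x_i\in\mathbb R^n$. For $v\in\mathbb R^n$ put $x^tv=(\langle x_1,v\rangle,\dots,\langle x_m,v\rangle)\in\mathbb R^m$, and for $s=(s_1,\dots,s_m)\in\mathbb R^m$ put $vs^t=(s_1v,\dots,s_mv)\in\mathbb R^{nm}$. For a convex body $L\subseteq\mathbb R^{nm}$ the $m$th-order fiber symmetrization and its adjoint are \[\bar S_vL=\Big\{x+v\big(\tfrac{s-r}{2}\big)^t:\ x^tv=0,\ s,r\in\mathbb R^m,\ x+vs^t\in L,\ x+vr^t\in L\Big\},\] \[\bar S^*_vL=\Big\{\tfrac{x-y}{2}+vs^t:\ x^tv=y^tv=0,\ s\in\mathbb R^m,\ x+vs^t\in L,\ y+vs^t\in L\Big\}.\] $L^\circ=\{z:\langle z,w\rangle\le1\ \forall w\in L\}$ denotes the polar. *)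

theory Defs
  imports "HOL-Analysis.Analysis"
begin

text \<open>Points of R^{nm} are modelled as x :: real^'n^'m, i.e. x = (x_1,...,x_m) with
  x_i = x$i in R^n. The inner product on real^'n^'m is the standard one on R^{nm}.\<close>

definition xtv :: "real^'n^'m \<Rightarrow> real^'n \<Rightarrow> real^'m" where
  "xtv x v = (\<chi> i. inner (x $ i) v)"

definition vst :: "real^'n \<Rightarrow> real^'m \<Rightarrow> real^'n^'m" where
  "vst v s = (\<chi> i. (s $ i) *\<^sub>R v)"

definition convex_body :: "'a::euclidean_space set \<Rightarrow> bool" where
  "convex_body K \<longleftrightarrow> convex K \<and> compact K \<and> interior K \<noteq> {}"

definition polar :: "'a::real_inner set \<Rightarrow> 'a set" where
  "polar L = {z. \<forall>w\<in>L. inner z w \<le> 1}"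

definition fiber_symm :: "real^'n \<Rightarrow> (real^'n^'m) set \<Rightarrow> (real^'n^'m) set" where
  "fiber_symm v L = {x + vst v ((1/2) *\<^sub>R (s - r)) | x s r.
      xtv x v = 0 \<and> x + vst v s \<in> L \<and> x + vst v r \<in> L}"

definition fiber_symm_adj :: "real^'n \<Rightarrow> (real^'n^'m) set \<Rightarrow> (real^'n^'m) set" where
  "fiber_symm_adj v L = {(1/2) *\<^sub>R (x - y) + vst v s | x y s.
      xtv x v = 0 \<and> xtv y v = 0 \<and> x + vst v s \<in> L \<and> y + vst v s \<in> L}"

end

theory Submission
  imports Defs
begin

text \<open>Decompose points of \<open>\<real>\<^sup>n\<^sup>m\<close> as \<open>x + v s\<^sup>t\<close> with \<open>x\<^sup>t v = 0\<close>. For unit \<open>v\<close> this splitting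
  is orthogonal, so for \<open>z = (x - y)/2 + v s\<^sup>t\<close> and \<open>w = x' + v ((s' - r')/2)\<^sup>t\<close>
  the inner product \<open>\<langle>z, w\<rangle>\<close> is the average of \<open>\<langle>x + v s\<^sup>t, x' + v s'\<^sup>t\<rangle>\<close> and
  \<open>\<langle>y + v s\<^sup>t, -x' - v r'\<^sup>t\<rangle>\<close>. The first pairs a point of \<open>L\<^sup>\<circ>\<close> with a point of \<open>L\<close>, and so does
  the second because \<open>L\<close> is origin-symmetric; both are therefore at most 1.\<close>

lemma inner_vst_left: "inner (vst v s) x = inner s (xtv x v)"
proof -
  have "inner (vst v s) x = (\<Sum>i\<in>UNIV. inner (vst v s $ i) (x $ i))"
    by (rule inner_vec_def)
  also have "\<dots> = (\<Sum>i\<in>UNIV. s $ i * inner (xtv x v $ i) 1)"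
    by (simp add: vst_def xtv_def inner_commute)
  also have "\<dots> = inner s (xtv x v)"
    by (simp add: inner_vec_def[of s] mult.commute)
  finally show ?thesis .
qed

lemma inner_vst_vst: "inner (vst v s) (vst v t) = inner s t * inner v v"
proof -
  have "inner (vst v s) (vst v t) = (\<Sum>i\<in>UNIV. inner (vst v s $ i) (vst v t $ i))"
    by (rule inner_vec_def)
  also have "\<dots> = (\<Sum>i\<in>UNIV. (s $ i * t $ i) * inner v v)"
    by (simp add: vst_def mult.commute mult.left_commute)
  also have "\<dots> = inner s t * inner v v"
    by (simp add: inner_vec_def[of s] sum_distrib_right)
  finally show ?thesis .
qed

lemma xtv_scaleR_diff: "xtv (c *\<^sub>R (x - y)) v = c *\<^sub>R (xtv x v - xtv y v)"
  and xtv_minus: "xtv (- x) v = - xtv x v"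
  by (simp_all add: xtv_def vec_eq_iff inner_diff_left)

lemma vst_minus: "vst v (- r) = - vst v r"
  by (simp add: vst_def vec_eq_iff)

lemma inner_fiber_decomposition:
  assumes "xtv a v = 0" "xtv b v = 0" "norm v = 1"
  shows "inner (a + vst v p) (b + vst v q) = inner a b + inner p q"
proof -
  have "inner v v = 1"
    using assms(3) by (simp add: norm_eq_sqrt_inner)
  moreover have "inner a (vst v q) = 0" "inner (vst v p) b = 0"
    using assms(1,2) by (simp_all add: inner_commute[of a] inner_vst_left)
  ultimately show ?thesis
    by (simp add: inner_add_left inner_add_right inner_vst_vst)
qed

lemma inner_fiber_symm_adj_fiber_symm:
  assumes "xtv x v = 0" "xtv y v = 0" "xtv x' v = 0" "norm v = 1"
  shows "inner ((1/2) *\<^sub>R (x - y) + vst v s) (x' + vst v ((1/2) *\<^sub>R (s' - r')))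
       = (1/2) * (inner (x + vst v s) (x' + vst v s')
                  + inner (y + vst v s) (- x' + vst v (- r')))"
proof -
  have "xtv ((1/2) *\<^sub>R (x - y)) v = 0" "xtv (- x') v = 0"
    using assms(1-3) by (simp_all add: xtv_scaleR_diff xtv_minus)
  then have "inner ((1/2) *\<^sub>R (x - y) + vst v s) (x' + vst v ((1/2) *\<^sub>R (s' - r')))
        = inner ((1/2) *\<^sub>R (x - y)) x' + inner s ((1/2) *\<^sub>R (s' - r'))"
    and "inner (x + vst v s) (x' + vst v s') = inner x x' + inner s s'"
    and "inner (y + vst v s) (- x' + vst v (- r')) = inner y (- x') + inner s (- r')"
    using assms by (simp_all only: inner_fiber_decomposition)
  then show ?thesis
    by (simp add: inner_diff_left inner_diff_right algebra_simps)
qed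

theorem proposition4p6:
  fixes L :: "(real^'n^'m) set" and v :: "real^'n"
  assumes "convex_body L" and "\<And>x. x \<in> L \<Longrightarrow> - x \<in> L" and "norm v = 1"
  shows "fiber_symm_adj v (polar L) \<subseteq> polar (fiber_symm v L)"
proof
  fix z assume "z \<in> fiber_symm_adj v (polar L)"
  then obtain x y s where z: "z = (1/2) *\<^sub>R (x - y) + vst v s"
    and "xtv x v = 0" "xtv y v = 0" "x + vst v s \<in> polar L" "y + vst v s \<in> polar L"
    unfolding fiber_symm_adj_def by blast
  have "inner z w \<le> 1" if "w \<in> fiber_symm v L" for w
  proof -
    obtain x' s' r' where w: "w = x' + vst v ((1/2) *\<^sub>R (s' - r'))"
      and "xtv x' v = 0" "x' + vst v s' \<in> L" and r': "x' + vst v r' \<in> L"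
      using \<open>w \<in> fiber_symm v L\<close> unfolding fiber_symm_def by blast
    moreover have "- x' + vst v (- r') \<in> L"
      using assms(2)[OF r'] by (simp add: vst_minus)
    ultimately show ?thesis
      using \<open>xtv x v = 0\<close> \<open>xtv y v = 0\<close> \<open>x + vst v s \<in> polar L\<close>
        \<open>y + vst v s \<in> polar L\<close> assms(3) unfolding z w polar_def
      by (fastforce simp: inner_fiber_symm_adj_fiber_symm)
  qed
  then show "z \<in> polar (fiber_symm v L)"
    unfolding polar_def by blast
qed

end
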